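(* Let $n\ge1$. For every permutation $\sigma$ of $\{1,\ldots,n\}$ let $P(\sigma)$ be its set-size record, and define $\mathrm{stackit}(\sigma)=S(P(\sigma))$ and $\mathrm{queueit}(\sigma)=Q(P(\sigma))$. Then $\mathrm{stackit}\circ\mathrm{stackit}=\mathrm{stackit}$ and its image is exactly the set of $312$-avoiding permutations, on which it is the identity; $\mathrm{queueit}\circ\mathrm{queueit}=\mathrm{queueit}$ and its image is exactly the set of $321$-avoiding permutations, on which it is the identity. Moreover, the restriction of $\mathrm{queueit}$ to $312$-avoiding permutations is a bijection onto the $321$-avoiding permutations, whose inverse is the restriction of $\mathrm{stackit}$ to $321$-avoiding permutations.
   Context: A weak Dyck path is a word in steps $U=(1,1)$, $D=(1,-1)$, $H=(1,0)$ starting and ending at height $0$ and never below $0$; it is peakless if no $U$ is immediately followed by $D$. Set-size record $P(\sigma)$: input $1,\ldots,n$ in order, a set (from which any element may be removed) initially empty. For $k=1,\ldots,n$ in turn, to output $\sigma_k$: if $\sigma_k$ is in the set, remove it to the output (step $D$); otherwise insert input elements into the set (one step $U$ each) until $\sigma_k$ is the next input element, then transfer it directly to output (step $H$). $P(\sigma)$ is the resulting word, a peakless weak Dyck path with $n$ steps of type $U$ or $H$. For such a path $P$, $S(P)$ (resp. $Q(P)$) is the output obtained by executing $P$ with a stack (resp. queue): input $1,\ldots,n$ in order; $U$ moves the next input element to the top of the stack (resp. back of the queue), $D$ moves the top of the stack (resp. front of the queue) to the end of the output, $H$ moves the next input element directly to the end of the output. A permutation avoids $312$ (resp. $321$) if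 there are no $i<j<k$ with $p_j<p_k<p_i$ (resp. $p_i>p_j>p_k$). *)

theory Defs
  imports Main
begin

datatype step = U | D | H

text \<open>Set-size record. State: next input element i, current set A.\<close>
fun ssr_aux :: "nat \<Rightarrow> nat set \<Rightarrow> nat list \<Rightarrow> step list" where
  "ssr_aux i A [] = []"
| "ssr_aux i A (x # xs) =
     (if x \<in> A then D # ssr_aux i (A - {x}) xs
      else replicate (x - i) U @ H # ssr_aux (Suc x) (A \<union> {i..<x}) xs)"

definition setsize_record :: "nat list \<Rightarrow> step list" where
  "setsize_record \<sigma> = ssr_aux 1 {} \<sigma>"

text \<open>Execution with a stack (top = head of list); input i, i+1, ...\<close>
fun run_stack :: "nat \<Rightarrow> nat list \<Rightarrow> step list \<Rightarrow> nat list" where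
  "run_stack i st [] = []"
| "run_stack i st (U # w) = run_stack (Suc i) (i # st) w"
| "run_stack i st (D # w) = hd st # run_stack i (tl st) w"
| "run_stack i st (H # w) = i # run_stack (Suc i) st w"

text \<open>Execution with a queue (front = head of list, back = end).\<close>
fun run_queue :: "nat \<Rightarrow> nat list \<Rightarrow> step list \<Rightarrow> nat list" where
  "run_queue i q [] = []"
| "run_queue i q (U # w) = run_queue (Suc i) (q @ [i]) w"
| "run_queue i q (D # w) = hd q # run_queue i (tl q) w"
| "run_queue i q (H # w) = i # run_queue (Suc i) q w"

definition S_out :: "step list \<Rightarrow> nat list" where "S_out P = run_stack 1 [] P"
definition Q_out :: "step list \<Rightarrow> nat list" where "Q_out P = run_queue 1 [] P"

definition stackit :: "nat list \<Rightarrow> nat list" where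
  "stackit \<sigma> = S_out (setsize_record \<sigma>)"
definition queueit :: "nat list \<Rightarrow> nat list" where
  "queueit \<sigma> = Q_out (setsize_record \<sigma>)"

definition perms :: "nat \<Rightarrow> nat list set" where
  "perms n = {\<sigma>. distinct \<sigma> \<and> set \<sigma> = {1..n}}"

definition avoids312 :: "nat list \<Rightarrow> bool" where
  "avoids312 p \<longleftrightarrow> \<not> (\<exists>i j k. i < j \<and> j < k \<and> k < length p \<and> p!j < p!k \<and> p!k < p!i)"

definition avoids321 :: "nat list \<Rightarrow> bool" where
  "avoids321 p \<longleftrightarrow> \<not> (\<exists>i j k. i < j \<and> j < k \<and> k < length p \<and> p!i > p!j \<and> p!j > p!k)"

end

theory Submission
  imports Defs
begin

text \<open>
  We treat both machines at once by running a record with an arbitrary insertion function,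
  subject only to the requirement that insertion adds exactly the new element to the container.

  (1) Record preservation: for every such container, executing P(\<sigma>) yields a permutation
      \<tau> of {1..n} with P(\<tau>) = P(\<sigma>).  Hence stackit and queueit only depend on the record,
      and composing them in any order with themselves or each other keeps the record.
  (2) Fixed points: executing P(\<sigma>) with a stack returns \<sigma> exactly when \<sigma> avoids 312,
      and with a queue exactly when \<sigma> avoids 321.  This is proved by induction along \<sigma>,
      tracking the pending set (sorted decreasingly in the stack, increasingly in the queue)
      and expressing pattern containment via "pairs" and "triples" of positions.
  The theorem then follows formally: an idempotent self-map has its fixed points as image,
  and stackit and queueit invert each other on the two sets of fixed points.
\<close>

fun run_with :: "(nat \<Rightarrow> nat list \<Rightarrow> nat list) \<Rightarrow> nat \<Rightarrow> nat list \<Rightarrow> step list \<Rightarrow> nat list" where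
  "run_with ins i c [] = []"
| "run_with ins i c (U # w) = run_with ins (Suc i) (ins i c) w"
| "run_with ins i c (D # w) = hd c # run_with ins i (tl c) w"
| "run_with ins i c (H # w) = i # run_with ins (Suc i) c w"

definition enqueue :: "nat \<Rightarrow> nat list \<Rightarrow> nat list" where
  "enqueue x q = q @ [x]"

lemma run_stack_eq: "run_stack i st w = run_with Cons i st w"
  by (induction i st w rule: run_stack.induct) simp_all

lemma run_queue_eq: "run_queue i q w = run_with enqueue i q w"
  by (induction i q w rule: run_queue.induct) (simp_all add: enqueue_def)

lemma fold_enqueue: "fold enqueue xs q = q @ xs"
  by (induction xs arbitrary: q) (simp_all add: enqueue_def)

lemma stackit_run: "stackit \<sigma> = run_with Cons 1 [] (setsize_record \<sigma>)"
  by (simp add: stackit_def S_out_def run_stack_eq)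

lemma queueit_run: "queueit \<sigma> = run_with enqueue 1 [] (setsize_record \<sigma>)"
  by (simp add: queueit_def Q_out_def run_queue_eq)

lemma run_with_Us:
  "run_with ins i c (replicate k U @ w) = run_with ins (i + k) (fold ins [i..<i + k] c) w"
proof (induction k arbitrary: i c)
  case (Suc k)
  have "[i..<i + Suc k] = i # [Suc i..<Suc i + k]" by (simp add: upt_conv_Cons)
  then show ?case using Suc.IH[of "Suc i" "ins i c"] by simp
qed simp

lemma run_pending:
  "x \<in> A \<Longrightarrow> run_with ins i c (ssr_aux i A (x # xs))
     = hd c # run_with ins i (tl c) (ssr_aux i (A - {x}) xs)"
  by simp

lemma run_new:
  "x \<notin> A \<Longrightarrow> i \<le> x \<Longrightarrow> run_with ins i c (ssr_aux i A (x # xs))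
     = x # run_with ins (Suc x) (fold ins [i..<x] c) (ssr_aux (Suc x) (A \<union> {i..<x}) xs)"
  using run_with_Us[of ins i c "x - i"] by simp

(* The situation while recording the remaining requests xs of a permutation of {1..n}:
   the next input is i and the set holds the pending elements A, all smaller than i. *)
definition record_state :: "nat \<Rightarrow> nat set \<Rightarrow> nat \<Rightarrow> nat list \<Rightarrow> bool" where
  "record_state i A n xs \<longleftrightarrow> distinct xs \<and> set xs = A \<union> {i..n} \<and> A \<subseteq> {..<i}"

lemma record_state_start: "\<sigma> \<in> perms n \<Longrightarrow> record_state 1 {} n \<sigma>"
  by (simp add: record_state_def perms_def)

lemma record_state_rest:
  assumes "record_state i A n (x # xs)"
  shows "set xs = (A \<union> {i..n}) - {x}" "distinct xs" "finite A" "A \<subseteq> {..<i}" "x \<notin> set xs"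
proof -
  have dist: "distinct (x # xs)" and elems: "set (x # xs) = A \<union> {i..n}"
    and below: "A \<subseteq> {..<i}"
    using assms unfolding record_state_def by blast+
  have "set xs = set (x # xs) - {x}" using dist by auto
  then show "set xs = (A \<union> {i..n}) - {x}" unfolding elems .
  show "distinct xs" "x \<notin> set xs" using dist by simp_all
  show "A \<subseteq> {..<i}" by (fact below)
  show "finite A" using finite_subset[OF below] by simp
qed

lemma record_state_pending:
  assumes "record_state i A n (x # xs)" "x \<in> A"
  shows "record_state i (A - {x}) n xs" "finite A"
    "A - {x} \<subseteq> set xs" "\<forall>b\<in>set xs. b < x \<longrightarrow> b \<in> A"
proof -
  note rest = record_state_rest[OF assms(1)]
  have "x < i" using assms(2) rest(4) by blast
  then have "(A \<union> {i..n}) - {x} = (A - {x}) \<union> {i..n}" by auto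
  then have elems: "set xs = (A - {x}) \<union> {i..n}" using rest(1) by simp
  then show "record_state i (A - {x}) n xs"
    using rest(2,4) by (auto simp: record_state_def)
  show "A - {x} \<subseteq> set xs" using elems by simp
  show "\<forall>b\<in>set xs. b < x \<longrightarrow> b \<in> A" using elems \<open>x < i\<close> by auto
  show "finite A" by (fact rest(3))
qed

lemma record_state_new:
  assumes "record_state i A n (x # xs)" "x \<notin> A"
  shows "record_state (Suc x) (A \<union> {i..<x}) n xs" "i \<le> x" "A \<subseteq> {..<i}" "finite A"
    "\<forall>a\<in>set xs. a \<in> A \<union> {i..<x} \<longleftrightarrow> a < x"
proof -
  note rest = record_state_rest[OF assms(1)]
  have "x \<in> A \<union> {i..n}" using assms(1) unfolding record_state_def by (metis list.set_intros(1))
  then have x: "i \<le> x" "x \<le> n" using assms(2) by auto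
  then have "(A \<union> {i..n}) - {x} = (A \<union> {i..<x}) \<union> {Suc x..n}" using assms(2) by auto
  then have elems: "set xs = (A \<union> {i..<x}) \<union> {Suc x..n}" using rest(1) by simp
  then show "record_state (Suc x) (A \<union> {i..<x}) n xs"
    using rest(2,4) x by (auto simp: record_state_def)
  show "\<forall>a\<in>set xs. a \<in> A \<union> {i..<x} \<longleftrightarrow> a < x" using elems rest(4) x(1) by auto
  show "i \<le> x" "A \<subseteq> {..<i}" "finite A" by (fact x(1), fact rest(4), fact rest(3))
qed

(* The only property of a container needed for record preservation: inserting x adds
   exactly x, and keeps the container free of repetitions when x is new. *)
definition proper_insert :: "(nat \<Rightarrow> nat list \<Rightarrow> nat list) \<Rightarrow> bool" where
  "proper_insert ins \<longleftrightarrow>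
     (\<forall>x c. set (ins x c) = insert x (set c) \<and> (distinct c \<and> x \<notin> set c \<longrightarrow> distinct (ins x c)))"

lemma proper_insert_Cons: "proper_insert Cons"
  by (simp add: proper_insert_def)

lemma proper_insert_enqueue: "proper_insert enqueue"
  by (simp add: proper_insert_def enqueue_def)

lemma fold_proper_insert:
  assumes "proper_insert ins" "distinct c" "distinct xs" "set xs \<inter> set c = {}"
  shows "set (fold ins xs c) = set c \<union> set xs \<and> distinct (fold ins xs c)"
  using assms(2-4)
proof (induction xs arbitrary: c)
  case (Cons x xs)
  have "set (ins x c) = insert x (set c)" "distinct (ins x c)"
    using assms(1) Cons.prems unfolding proper_insert_def by auto
  then show ?case using Cons.IH[of "ins x c"] Cons.prems by auto
qed simp

(* The point is that the record only depends on whether each request is pending. *)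
lemma run_preserves_record:
  assumes "proper_insert ins" "record_state i A n xs"
    and "distinct c" "set c \<subseteq> {..<i}" "card (set c) = card A"
  shows "ssr_aux i (set c) (run_with ins i c (ssr_aux i A xs)) = ssr_aux i A xs
       \<and> distinct (run_with ins i c (ssr_aux i A xs))
       \<and> set (run_with ins i c (ssr_aux i A xs)) = set c \<union> {i..n}"
  using assms(2-)
proof (induction xs arbitrary: i A c)
  case Nil
  then have "A = {}" "{i..n} = {}" by (auto simp: record_state_def)
  then show ?case using Nil.prems by simp
next
  case (Cons x xs)
  show ?case
  proof (cases "x \<in> A")
    case True
    note st = record_state_pending[OF Cons.prems(1) True]
    have "c \<noteq> []" using Cons.prems(4) True st(2) by (auto simp: card_gt_0_iff)
    then obtain s c' where c: "c = s # c'" by (cases c) auto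
    have s: "s \<notin> set c'" "s < i" using Cons.prems(2,3) c by auto
    have "card (set c') = card (A - {x})" using Cons.prems(2,4) c True st(2) by simp
    then have IH: "ssr_aux i (set c') (run_with ins i c' (ssr_aux i (A - {x}) xs)) = ssr_aux i (A - {x}) xs
        \<and> distinct (run_with ins i c' (ssr_aux i (A - {x}) xs))
        \<and> set (run_with ins i c' (ssr_aux i (A - {x}) xs)) = set c' \<union> {i..n}"
      using Cons.IH[OF st(1)] Cons.prems(2,3) c by simp
    have "set c - {s} = set c'" using s c by auto
    then show ?thesis using IH c True s by auto
  next
    case False
    note st = record_state_new[OF Cons.prems(1) False]
    let ?c = "fold ins [i..<x] c"
    have "set [i..<x] \<inter> set c = {}" using Cons.prems(3) by auto
    then have c': "set ?c = set c \<union> {i..<x}" "distinct ?c"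
      using fold_proper_insert[OF assms(1) Cons.prems(2)] by auto
    have "card (set c \<union> {i..<x}) = card (set c) + card {i..<x}"
      "card (A \<union> {i..<x}) = card A + card {i..<x}"
      using Cons.prems(3) st(3,4) by (fastforce intro: card_Un_disjoint)+
    then have "card (set ?c) = card (A \<union> {i..<x})" using Cons.prems(4) c' by simp
    moreover have "set ?c \<subseteq> {..<Suc x}" using Cons.prems(3) c'(1) st(2) by auto
    ultimately have IH: "ssr_aux (Suc x) (set ?c) (run_with ins (Suc x) ?c (ssr_aux (Suc x) (A \<union> {i..<x}) xs))
          = ssr_aux (Suc x) (A \<union> {i..<x}) xs
        \<and> distinct (run_with ins (Suc x) ?c (ssr_aux (Suc x) (A \<union> {i..<x}) xs))
        \<and> set (run_with ins (Suc x) ?c (ssr_aux (Suc x) (A \<union> {i..<x}) xs)) = set ?c \<union> {Suc x..n}"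
      using Cons.IH[OF st(1) c'(2)] by blast
    have "x \<notin> set c" "x \<le> n" using Cons.prems(1,3) st(2) False
      by (auto simp: record_state_def)
    moreover have "insert x (set c \<union> {i..<x} \<union> {Suc x..n}) = set c \<union> {i..n}"
      using \<open>x \<le> n\<close> st(2) by auto
    ultimately show ?thesis using IH c'(1) False st(2) run_new[OF False st(2), of ins c xs] by auto
  qed
qed

lemma run_record_permutation:
  assumes "proper_insert ins" "\<sigma> \<in> perms n"
  shows "run_with ins 1 [] (setsize_record \<sigma>) \<in> perms n
       \<and> setsize_record (run_with ins 1 [] (setsize_record \<sigma>)) = setsize_record \<sigma>"
  using run_preserves_record[OF assms(1) record_state_start[OF assms(2)], of "[]"]
  by (simp add: setsize_record_def perms_def)

(* Occurrence of a pair, resp. triple, of positions whose entries are related by R, resp. T.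
   They serve to peel off the first letter of a pattern occurrence. *)
definition has_pair :: "('a \<Rightarrow> 'a \<Rightarrow> bool) \<Rightarrow> 'a list \<Rightarrow> bool" where
  "has_pair R xs \<longleftrightarrow> (\<exists>j k. j < k \<and> k < length xs \<and> R (xs!j) (xs!k))"

definition has_triple :: "('a \<Rightarrow> 'a \<Rightarrow> 'a \<Rightarrow> bool) \<Rightarrow> 'a list \<Rightarrow> bool" where
  "has_triple T xs \<longleftrightarrow> (\<exists>i j k. i < j \<and> j < k \<and> k < length xs \<and> T (xs!i) (xs!j) (xs!k))"

lemma has_pair_Cons:
  "has_pair R (x # xs) \<longleftrightarrow> (\<exists>b\<in>set xs. R x b) \<or> has_pair R xs"
proof
  assume "has_pair R (x # xs)"
  then obtain j k where jk: "j < k" "k < Suc (length xs)" "R ((x # xs)!j) ((x # xs)!k)"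
    unfolding has_pair_def by auto
  then obtain k' where k: "k = Suc k'" by (cases k) auto
  show "(\<exists>b\<in>set xs. R x b) \<or> has_pair R xs"
  proof (cases j)
    case 0
    then show ?thesis using jk k by auto
  next
    case (Suc j')
    then show ?thesis using jk k unfolding has_pair_def by auto
  qed
next
  assume "(\<exists>b\<in>set xs. R x b) \<or> has_pair R xs"
  then show "has_pair R (x # xs)"
  proof
    assume "\<exists>b\<in>set xs. R x b"
    then obtain k where "k < length xs" "R x (xs!k)" by (auto simp: in_set_conv_nth)
    then show ?thesis unfolding has_pair_def by (intro exI[of _ 0] exI[of _ "Suc k"]) simp
  next
    assume "has_pair R xs"
    then obtain j k where "j < k" "k < length xs" "R (xs!j) (xs!k)" unfolding has_pair_def by blast
    then show ?thesis unfolding has_pair_def by (intro exI[of _ "Suc j"] exI[of _ "Suc k"]) simp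
  qed
qed

lemma has_triple_Cons:
  "has_triple T (x # xs) \<longleftrightarrow> has_pair (T x) xs \<or> has_triple T xs"
proof
  assume "has_triple T (x # xs)"
  then obtain i j k where ijk: "i < j" "j < k" "k < Suc (length xs)"
      "T ((x # xs)!i) ((x # xs)!j) ((x # xs)!k)"
    unfolding has_triple_def by auto
  then obtain j' k' where jk: "j = Suc j'" "k = Suc k'" by (cases j; cases k) auto
  show "has_pair (T x) xs \<or> has_triple T xs"
  proof (cases i)
    case 0
    then show ?thesis using ijk jk unfolding has_pair_def by auto
  next
    case (Suc i')
    then show ?thesis using ijk jk unfolding has_triple_def by auto
  qed
next
  assume "has_pair (T x) xs \<or> has_triple T xs"
  then show "has_triple T (x # xs)"
  proof
    assume "has_pair (T x) xs"
    then obtain j k where "j < k" "k < length xs" "T x (xs!j) (xs!k)" unfolding has_pair_def by blast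
    then show ?thesis unfolding has_triple_def
      by (intro exI[of _ 0] exI[of _ "Suc j"] exI[of _ "Suc k"]) simp
  next
    assume "has_triple T xs"
    then obtain i j k where "i < j" "j < k" "k < length xs" "T (xs!i) (xs!j) (xs!k)"
      unfolding has_triple_def by blast
    then show ?thesis unfolding has_triple_def
      by (intro exI[of _ "Suc i"] exI[of _ "Suc j"] exI[of _ "Suc k"]) simp
  qed
qed

lemma has_pair_mono:
  assumes "has_pair R xs" "\<And>a b. a \<in> set xs \<Longrightarrow> b \<in> set xs \<Longrightarrow> R a b \<Longrightarrow> S a b"
  shows "has_pair S xs"
proof -
  obtain j k where jk: "j < k" "k < length xs" "R (xs!j) (xs!k)"
    using assms(1) unfolding has_pair_def by blast
  then have "S (xs!j) (xs!k)" using assms(2) by simp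
  then show ?thesis using jk unfolding has_pair_def by blast
qed

lemma has_pair_cong:
  assumes "\<And>a b. a \<in> set xs \<Longrightarrow> b \<in> set xs \<Longrightarrow> R a b \<longleftrightarrow> S a b"
  shows "has_pair R xs \<longleftrightarrow> has_pair S xs"
  using has_pair_mono[of R xs S] has_pair_mono[of S xs R] assms by blast

lemma avoids312_Cons:
  "avoids312 (x # xs) \<longleftrightarrow> \<not> has_pair (\<lambda>b c. b < c \<and> c < x) xs \<and> avoids312 xs"
proof -
  have "avoids312 p \<longleftrightarrow> \<not> has_triple (\<lambda>a b c. b < c \<and> c < a) p" for p
    unfolding avoids312_def has_triple_def ..
  then show ?thesis by (simp add: has_triple_Cons)
qed

lemma avoids321_Cons:
  "avoids321 (x # xs) \<longleftrightarrow> \<not> has_pair (\<lambda>b c. b < x \<and> c < b) xs \<and> avoids321 xs"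
proof -
  have "avoids321 p \<longleftrightarrow> \<not> has_triple (\<lambda>a b c. b < a \<and> c < b) p" for p
    unfolding avoids321_def has_triple_def by simp
  then show ?thesis by (simp add: has_triple_Cons)
qed

(* While the stack machine reproduces the requests, the stack holds the pending set in
   decreasing order, so a pending request is served correctly iff it is the largest pending
   element, i.e. iff no larger pending element is requested later. *)
lemma stack_top_request:
  assumes "record_state i A n (x # xs)" "x \<in> A" "sorted_wrt (>) (s # st)" "set (s # st) = A"
  shows "s = x \<longleftrightarrow> \<not> (\<exists>b\<in>set xs. x < b \<and> b \<in> A)"
proof
  assume "s = x"
  then show "\<not> (\<exists>b\<in>set xs. x < b \<and> b \<in> A)"
    using assms(3,4) record_state_rest(5)[OF assms(1)] by auto
next
  assume no_larger: "\<not> (\<exists>b\<in>set xs. x < b \<and> b \<in> A)"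
  show "s = x"
  proof (rule ccontr)
    assume "s \<noteq> x"
    then have "x < s" "s \<in> set xs"
      using assms(2-4) record_state_pending(3)[OF assms(1,2)] by auto
    then show False using no_larger assms(4) by auto
  qed
qed

lemma stack_run_fixed:
  assumes "record_state i A n xs" "sorted_wrt (>) st" "set st = A"
  shows "run_with Cons i st (ssr_aux i A xs) = xs
     \<longleftrightarrow> \<not> has_pair (\<lambda>a b. a < b \<and> b \<in> A) xs \<and> avoids312 xs"
  using assms
proof (induction xs arbitrary: i A st)
  case Nil
  then show ?case by (simp add: has_pair_def avoids312_def)
next
  case (Cons x xs)
  show ?case
  proof (cases "x \<in> A")
    case True
    note st = record_state_pending[OF Cons.prems(1) True]
    obtain s st' where st_eq: "st = s # st'" using Cons.prems(3) True by (cases st) auto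
    have s_top: "\<forall>y\<in>set st'. y < s" "sorted_wrt (>) st'" using Cons.prems(2) st_eq by auto
    have A_eq: "A = insert s (set st')" using Cons.prems(3) st_eq by auto
    have top: "s = x \<longleftrightarrow> \<not> (\<exists>b\<in>set xs. x < b \<and> b \<in> A)"
      using stack_top_request[OF Cons.prems(1) True] Cons.prems(2,3) st_eq by simp
    have pending_rest: "has_pair (\<lambda>a b. a < b \<and> b \<in> A) xs
        \<longleftrightarrow> has_pair (\<lambda>a b. a < b \<and> b \<in> A - {x}) xs"
      by (rule has_pair_cong) (use record_state_rest(5)[OF Cons.prems(1)] in auto)
    have below_pending: "has_pair (\<lambda>a b. a < b \<and> b \<in> A) xs"
      if "has_pair (\<lambda>b c. b < c \<and> c < x) xs"
      by (rule has_pair_mono[OF that]) (use st(4) in auto)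
    have run: "run_with Cons i st (ssr_aux i A (x # xs)) = s # run_with Cons i st' (ssr_aux i (A - {x}) xs)"
      using run_pending[OF True] st_eq by simp
    show ?thesis
    proof (cases "s = x")
      case True
      have "set st' = A - {x}" using A_eq True s_top by auto
      then have "run_with Cons i st' (ssr_aux i (A - {x}) xs) = xs
          \<longleftrightarrow> \<not> has_pair (\<lambda>a b. a < b \<and> b \<in> A - {x}) xs \<and> avoids312 xs"
        using Cons.IH[OF st(1) s_top(2)] by blast
      then show ?thesis using run True top pending_rest below_pending
        by (auto simp: has_pair_Cons avoids312_Cons)
    next
      case False
      then show ?thesis using run top by (auto simp: has_pair_Cons)
    qed
  next
    case False
    note st = record_state_new[OF Cons.prems(1) False]
    let ?st = "rev [i..<x] @ st"
    have "sorted_wrt (>) ?st" "set ?st = A \<union> {i..<x}"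
      using Cons.prems(2,3) st(2,3) by (auto simp: sorted_wrt_append sorted_wrt_rev)
    then have IH: "run_with Cons (Suc x) ?st (ssr_aux (Suc x) (A \<union> {i..<x}) xs) = xs
        \<longleftrightarrow> \<not> has_pair (\<lambda>a b. a < b \<and> b \<in> A \<union> {i..<x}) xs \<and> avoids312 xs"
      using Cons.IH[OF st(1)] by blast
    have new_rest: "has_pair (\<lambda>a b. a < b \<and> b \<in> A \<union> {i..<x}) xs
        \<longleftrightarrow> has_pair (\<lambda>a b. a < b \<and> b < x) xs"
      by (rule has_pair_cong) (use st(5) in auto)
    have below_new: "has_pair (\<lambda>a b. a < b \<and> b < x) xs"
      if "has_pair (\<lambda>a b. a < b \<and> b \<in> A) xs"
      by (rule has_pair_mono[OF that]) (use st(2,3) in auto)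
    have "\<not> (\<exists>b\<in>set xs. x < b \<and> b \<in> A)" using st(2,3) by auto
    then show ?thesis using run_new[OF False st(2), of Cons st xs] IH new_rest below_new
      by (auto simp: fold_Cons_rev has_pair_Cons avoids312_Cons)
  qed
qed

(* Dually, the queue holds the pending set in increasing order, so a pending request is
   served correctly iff it is the smallest pending element, i.e. iff no smaller element is
   requested later. *)
lemma queue_front_request:
  assumes "record_state i A n (x # xs)" "x \<in> A" "sorted_wrt (<) (s # q)" "set (s # q) = A"
  shows "s = x \<longleftrightarrow> \<not> (\<exists>b\<in>set xs. b < x)"
proof
  assume "s = x"
  then show "\<not> (\<exists>b\<in>set xs. b < x)"
    using assms(3,4) record_state_rest(5)[OF assms(1)] record_state_pending(4)[OF assms(1,2)]
    by fastforce
next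
  assume no_smaller: "\<not> (\<exists>b\<in>set xs. b < x)"
  show "s = x"
  proof (rule ccontr)
    assume "s \<noteq> x"
    then have "s < x" "s \<in> set xs"
      using assms(2-4) record_state_pending(3)[OF assms(1,2)] by auto
    then show False using no_smaller by auto
  qed
qed

lemma queue_run_fixed:
  assumes "record_state i A n xs" "sorted_wrt (<) q" "set q = A"
  shows "run_with enqueue i q (ssr_aux i A xs) = xs
     \<longleftrightarrow> \<not> has_pair (\<lambda>a b. a \<in> A \<and> b < a) xs \<and> avoids321 xs"
  using assms
proof (induction xs arbitrary: i A q)
  case Nil
  then show ?case by (simp add: has_pair_def avoids321_def)
next
  case (Cons x xs)
  show ?case
  proof (cases "x \<in> A")
    case True
    note st = record_state_pending[OF Cons.prems(1) True]
    obtain s q' where q_eq: "q = s # q'" using Cons.prems(3) True by (cases q) auto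
    have s_front: "\<forall>y\<in>set q'. s < y" "sorted_wrt (<) q'" using Cons.prems(2) q_eq by auto
    have A_eq: "A = insert s (set q')" using Cons.prems(3) q_eq by auto
    have front: "s = x \<longleftrightarrow> \<not> (\<exists>b\<in>set xs. b < x)"
      using queue_front_request[OF Cons.prems(1) True] Cons.prems(2,3) q_eq by simp
    have pending_rest: "has_pair (\<lambda>a b. a \<in> A \<and> b < a) xs
        \<longleftrightarrow> has_pair (\<lambda>a b. a \<in> A - {x} \<and> b < a) xs"
      by (rule has_pair_cong) (use record_state_rest(5)[OF Cons.prems(1)] in auto)
    have below_pending: "has_pair (\<lambda>a b. a \<in> A \<and> b < a) xs"
      if "has_pair (\<lambda>b c. b < x \<and> c < b) xs"
      by (rule has_pair_mono[OF that]) (use st(4) in auto)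
    have run: "run_with enqueue i q (ssr_aux i A (x # xs))
        = s # run_with enqueue i q' (ssr_aux i (A - {x}) xs)"
      using run_pending[OF True] q_eq by simp
    show ?thesis
    proof (cases "s = x")
      case True
      have "set q' = A - {x}" using A_eq True s_front by auto
      then have "run_with enqueue i q' (ssr_aux i (A - {x}) xs) = xs
          \<longleftrightarrow> \<not> has_pair (\<lambda>a b. a \<in> A - {x} \<and> b < a) xs \<and> avoids321 xs"
        using Cons.IH[OF st(1) s_front(2)] by blast
      then show ?thesis using run True \<open>x \<in> A\<close> front pending_rest below_pending
        by (auto simp: has_pair_Cons avoids321_Cons)
    next
      case False
      then show ?thesis using run front \<open>x \<in> A\<close> by (auto simp: has_pair_Cons)
    qed
  next
    case False
    note st = record_state_new[OF Cons.prems(1) False]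
    let ?q = "q @ [i..<x]"
    have "sorted_wrt (<) ?q" "set ?q = A \<union> {i..<x}"
      using Cons.prems(2,3) st(3) by (auto simp: sorted_wrt_append)
    then have IH: "run_with enqueue (Suc x) ?q (ssr_aux (Suc x) (A \<union> {i..<x}) xs) = xs
        \<longleftrightarrow> \<not> has_pair (\<lambda>a b. a \<in> A \<union> {i..<x} \<and> b < a) xs \<and> avoids321 xs"
      using Cons.IH[OF st(1)] by blast
    have new_rest: "has_pair (\<lambda>a b. a \<in> A \<union> {i..<x} \<and> b < a) xs
        \<longleftrightarrow> has_pair (\<lambda>a b. a < x \<and> b < a) xs"
      by (rule has_pair_cong) (use st(5) in auto)
    have below_new: "has_pair (\<lambda>a b. a < x \<and> b < a) xs"
      if "has_pair (\<lambda>a b. a \<in> A \<and> b < a) xs"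
      by (rule has_pair_mono[OF that]) (use st(2,3) in auto)
    show ?thesis using run_new[OF False st(2), of enqueue q xs] False IH new_rest below_new
      by (auto simp: fold_enqueue has_pair_Cons avoids321_Cons)
  qed
qed

lemma stackit_fixed_iff: "\<sigma> \<in> perms n \<Longrightarrow> stackit \<sigma> = \<sigma> \<longleftrightarrow> avoids312 \<sigma>"
  using stack_run_fixed[OF record_state_start, of \<sigma> n "[]"]
  by (simp add: stackit_run setsize_record_def has_pair_def)

lemma queueit_fixed_iff: "\<sigma> \<in> perms n \<Longrightarrow> queueit \<sigma> = \<sigma> \<longleftrightarrow> avoids321 \<sigma>"
  using queue_run_fixed[OF record_state_start, of \<sigma> n "[]"]
  by (simp add: queueit_run setsize_record_def has_pair_def)

(* Consequences of record preservation: stackit and queueit map permutations to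
   permutations with the same record, so composing them only depends on the outer map. *)
lemma stackit_queueit_record:
  assumes "\<sigma> \<in> perms n"
  shows "stackit \<sigma> \<in> perms n" "queueit \<sigma> \<in> perms n"
    "stackit (stackit \<sigma>) = stackit \<sigma>" "queueit (queueit \<sigma>) = queueit \<sigma>"
    "stackit (queueit \<sigma>) = stackit \<sigma>" "queueit (stackit \<sigma>) = queueit \<sigma>"
proof -
  have "stackit \<sigma> \<in> perms n \<and> setsize_record (stackit \<sigma>) = setsize_record \<sigma>"
    "queueit \<sigma> \<in> perms n \<and> setsize_record (queueit \<sigma>) = setsize_record \<sigma>"
    using run_record_permutation[OF _ assms] proper_insert_Cons proper_insert_enqueue
    by (simp_all add: stackit_run queueit_run)
  then show "stackit \<sigma> \<in> perms n" "queueit \<sigma> \<in> perms n"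
    "stackit (stackit \<sigma>) = stackit \<sigma>" "queueit (queueit \<sigma>) = queueit \<sigma>"
    "stackit (queueit \<sigma>) = stackit \<sigma>" "queueit (stackit \<sigma>) = queueit \<sigma>"
    by (simp_all add: stackit_run queueit_run)
qed

lemma idempotent_image:
  assumes "\<And>x. x \<in> X \<Longrightarrow> f x \<in> X" "\<And>x. x \<in> X \<Longrightarrow> f (f x) = f x"
  shows "f ` X = {x \<in> X. f x = x}"
  using assms by force

theorem mainTheorem6:
  fixes n :: nat
  assumes "n \<ge> 1"
  shows "(\<forall>\<sigma>\<in>perms n. stackit (stackit \<sigma>) = stackit \<sigma>)
       \<and> stackit ` perms n = {\<sigma>\<in>perms n. avoids312 \<sigma>}
       \<and> (\<forall>\<sigma>\<in>perms n. avoids312 \<sigma> \<longrightarrow> stackit \<sigma> = \<sigma>)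
       \<and> (\<forall>\<sigma>\<in>perms n. queueit (queueit \<sigma>) = queueit \<sigma>)
       \<and> queueit ` perms n = {\<sigma>\<in>perms n. avoids321 \<sigma>}
       \<and> (\<forall>\<sigma>\<in>perms n. avoids321 \<sigma> \<longrightarrow> queueit \<sigma> = \<sigma>)
       \<and> bij_betw queueit {\<sigma>\<in>perms n. avoids312 \<sigma>} {\<sigma>\<in>perms n. avoids321 \<sigma>}
       \<and> bij_betw stackit {\<sigma>\<in>perms n. avoids321 \<sigma>} {\<sigma>\<in>perms n. avoids312 \<sigma>}
       \<and> (\<forall>\<sigma>\<in>perms n. avoids312 \<sigma> \<longrightarrow> stackit (queueit \<sigma>) = \<sigma>)
       \<and> (\<forall>\<sigma>\<in>perms n. avoids321 \<sigma> \<longrightarrow> queueit (stackit \<sigma>) = \<sigma>)"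
proof -
  have fix312: "{\<sigma>\<in>perms n. avoids312 \<sigma>} = {\<sigma>\<in>perms n. stackit \<sigma> = \<sigma>}"
    and fix321: "{\<sigma>\<in>perms n. avoids321 \<sigma>} = {\<sigma>\<in>perms n. queueit \<sigma> = \<sigma>}"
    using stackit_fixed_iff queueit_fixed_iff by blast+
  have image: "stackit ` perms n = {\<sigma>\<in>perms n. avoids312 \<sigma>}"
    "queueit ` perms n = {\<sigma>\<in>perms n. avoids321 \<sigma>}"
    unfolding fix312 fix321 by (rule idempotent_image; simp add: stackit_queueit_record)+
  have inverse: "\<forall>\<sigma>\<in>perms n. avoids312 \<sigma> \<longrightarrow> stackit (queueit \<sigma>) = \<sigma>"
    "\<forall>\<sigma>\<in>perms n. avoids321 \<sigma> \<longrightarrow> queueit (stackit \<sigma>) = \<sigma>"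
    using stackit_queueit_record fix312 fix321 by auto
  have maps: "queueit ` {\<sigma>\<in>perms n. avoids312 \<sigma>} \<subseteq> {\<sigma>\<in>perms n. avoids321 \<sigma>}"
    "stackit ` {\<sigma>\<in>perms n. avoids321 \<sigma>} \<subseteq> {\<sigma>\<in>perms n. avoids312 \<sigma>}"
    unfolding fix312 fix321 using stackit_queueit_record by auto
  have "bij_betw queueit {\<sigma>\<in>perms n. avoids312 \<sigma>} {\<sigma>\<in>perms n. avoids321 \<sigma>}"
    "bij_betw stackit {\<sigma>\<in>perms n. avoids321 \<sigma>} {\<sigma>\<in>perms n. avoids312 \<sigma>}"
    using inverse maps by (auto intro!: bij_betw_byWitness)
  then show ?thesis using image inverse
    by (intro conjI) (simp_all add: stackit_queueit_record stackit_fixed_iff queueit_fixed_iff)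
qed

end
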